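(* Let $D$ be an infinite commutative unital integral domain. The $D$-module $D\langle X\rangle/I$ is spanned by the images of the monomials in $B$.
   Context: Let $Y=\{y_1,y_2,\dots\}$ and $Z=\{z_1,z_2,\dots\}$ be disjoint countable sets of variables, $X=Y\cup Z$, and $D\langle X\rangle$ the free unital associative $D$-algebra on $X$, $\mathbb{Z}_2$-graded with the $y_i$ even and the $z_i$ odd. Let $L\langle X\rangle$ be the Lie subalgebra of $D\langle X\rangle$ (bracket $[a,b]=ab-ba$) generated by $X$, with induced grading $L\langle X\rangle^{(0)}\oplus L\langle X\rangle^{(1)}$. An ideal of weak graded identities is a two-sided ideal $J$ of $D\langle X\rangle$ closed under every algebra endomorphism of $D\langle X\rangle$ mapping each $y_i$ into $L\langle X\rangle^{(0)}$ and each $z_i$ into $L\langle X\rangle^{(1)}$; the ideal of weak graded identities generated by a set of polynomials is the smallest such ideal containing it. Let $I$ be the ideal of weak graded identities generated by $y_1y_2-y_2y_1$, $z_1z_2z_3-z_3z_2z_1$ and $y_1z_1+z_1y_1$. Let $B$ be the set of monomials of the forms $y_{a_1}\cdots y_{a_k}$ ($k\ge0$, $a_1\le\dots\le a_k$; $k=0$ gives $1$) and $y_{a_1}\cdots y_{a_k}z_{c_1}z_{d_1}z_{c_2}z_{d_2}\cdots z_{c_m}z_{d_m}$ or $y_{a_1}\cdots y_{a_k}z_{c_1}z_{d_1}\cdots z_{d_{m-1}}z_{c_m}$ (the last odd variable $z_{d_m}$ may be omitted), where $k\ge0$, $m\ge1$, $a_1\le\dots\le a_k$, $c_1\le\dots\le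 c_m$, and the $d_j$ present are nondecreasing. *)

theory Defs
  imports Main
begin

text \<open>Variables: Y i (even) and Z i (odd), i :: nat.\<close>
datatype var = Y nat | Z nat

text \<open>Elements of the free algebra D<X>: functions from words (monomials) to
coefficients with finite support (carrier ncP).\<close>
type_synonym 'a ncpoly = "var list \<Rightarrow> 'a"

definition ncP :: "'a::zero ncpoly set" where
  "ncP = {f. finite {w. f w \<noteq> 0}}"

definition mon :: "var list \<Rightarrow> 'a::{zero,one} ncpoly" where
  "mon u = (\<lambda>w. if w = u then 1 else 0)"

definition padd :: "'a::plus ncpoly \<Rightarrow> 'a ncpoly \<Rightarrow> 'a ncpoly" where
  "padd f g = (\<lambda>w. f w + g w)"

definition psub :: "'a::minus ncpoly \<Rightarrow> 'a ncpoly \<Rightarrow> 'a ncpoly" where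
  "psub f g = (\<lambda>w. f w - g w)"

definition psmult :: "'a::times \<Rightarrow> 'a ncpoly \<Rightarrow> 'a ncpoly" where
  "psmult c f = (\<lambda>w. c * f w)"

definition pmul :: "'a::comm_ring_1 ncpoly \<Rightarrow> 'a ncpoly \<Rightarrow> 'a ncpoly" where
  "pmul f g = (\<lambda>w. \<Sum>i\<le>length w. f (take i w) * g (drop i w))"

definition pbr :: "'a::comm_ring_1 ncpoly \<Rightarrow> 'a ncpoly \<Rightarrow> 'a ncpoly" where
  "pbr a b = psub (pmul a b) (pmul b a)"

definition eval_word :: "(var \<Rightarrow> 'a::comm_ring_1 ncpoly) \<Rightarrow> var list \<Rightarrow> 'a ncpoly" where
  "eval_word s u = foldr (\<lambda>x acc. pmul (s x) acc) u (mon [])"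

definition subst :: "(var \<Rightarrow> 'a::comm_ring_1 ncpoly) \<Rightarrow> 'a ncpoly \<Rightarrow> 'a ncpoly" where
  "subst s f = (\<lambda>w. \<Sum>u\<in>{u. f u \<noteq> 0}. f u * eval_word s u w)"

inductive_set LieX :: "'a::comm_ring_1 ncpoly set" where
  gen: "mon [x] \<in> LieX"
| zero: "(\<lambda>_. 0) \<in> LieX"
| add: "a \<in> LieX \<Longrightarrow> b \<in> LieX \<Longrightarrow> padd a b \<in> LieX"
| smult: "a \<in> LieX \<Longrightarrow> psmult c a \<in> LieX"
| br: "a \<in> LieX \<Longrightarrow> b \<in> LieX \<Longrightarrow> pbr a b \<in> LieX"

definition is_Z :: "var \<Rightarrow> bool" where
  "is_Z x = (case x of Z _ \<Rightarrow> True | Y _ \<Rightarrow> False)"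

definition zdeg :: "var list \<Rightarrow> nat" where
  "zdeg w = length (filter is_Z w)"

text \<open>Homogeneous component of Z2-degree p (False = even, True = odd).\<close>
definition homog :: "bool \<Rightarrow> 'a::zero ncpoly \<Rightarrow> bool" where
  "homog p f = (\<forall>w. f w \<noteq> 0 \<longrightarrow> odd (zdeg w) = p)"

definition L0 :: "'a::comm_ring_1 ncpoly set" where
  "L0 = {f \<in> LieX. homog False f}"

definition L1 :: "'a::comm_ring_1 ncpoly set" where
  "L1 = {f \<in> LieX. homog True f}"

definition is_ideal :: "'a::comm_ring_1 ncpoly set \<Rightarrow> bool" where
  "is_ideal J = (J \<subseteq> ncP \<and> (\<lambda>_. 0) \<in> J
     \<and> (\<forall>a\<in>J. \<forall>b\<in>J. padd a b \<in> J)
     \<and> (\<forall>a\<in>J. \<forall>p\<in>ncP. pmul p a \<in> J \<and> pmul a p \<in> J))"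

definition weak_subst :: "(var \<Rightarrow> 'a::comm_ring_1 ncpoly) \<Rightarrow> bool" where
  "weak_subst s = ((\<forall>i. s (Y i) \<in> L0) \<and> (\<forall>i. s (Z i) \<in> L1))"

definition weak_ideal :: "'a::comm_ring_1 ncpoly set \<Rightarrow> bool" where
  "weak_ideal J = (is_ideal J \<and> (\<forall>s. weak_subst s \<longrightarrow> (\<forall>f\<in>J. subst s f \<in> J)))"

definition weak_ideal_gen :: "'a::comm_ring_1 ncpoly set \<Rightarrow> 'a ncpoly set" where
  "weak_ideal_gen S = \<Inter> {J. weak_ideal J \<and> S \<subseteq> J}"

definition gens :: "'a::comm_ring_1 ncpoly set" where
  "gens = {psub (mon [Y 1, Y 2]) (mon [Y 2, Y 1]),
           psub (mon [Z 1, Z 2, Z 3]) (mon [Z 3, Z 2, Z 1]),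
           padd (mon [Y 1, Z 1]) (mon [Z 1, Y 1])}"

definition Iw :: "'a::comm_ring_1 ncpoly set" where
  "Iw = weak_ideal_gen gens"

text \<open>The monomial set B: y_{a1}..y_{ak} z_{c1} z_{d1} ... with a, c, d nondecreasing;
 c is the subsequence of even positions of the z-index list, d the odd positions.\<close>
definition Bmon :: "var list set" where
  "Bmon = {map Y a @ map Z c | a c. sorted a \<and>
      (\<forall>i j. i < j \<and> j < length c \<and> even i = even j \<longrightarrow> c ! i \<le> c ! j)}"

end

theory Submission
  imports Defs
begin

text \<open>Modulo the weak identities, every word is equal, up to sign, to a word of \<open>Bmon\<close>:
substituting variables for variables in the generators shows that \<open>y\<^sub>iy\<^sub>j \<equiv> y\<^sub>jy\<^sub>i\<close>,
\<open>z\<^sub>jy\<^sub>i \<equiv> -y\<^sub>iz\<^sub>j\<close> and \<open>z\<^sub>az\<^sub>bz\<^sub>c \<equiv> z\<^sub>cz\<^sub>bz\<^sub>a\<close>. With the first two relations all even variables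
move to the front and get sorted; the third swaps two odd variables at distance two, so the odd
variables at even positions and those at odd positions can be sorted independently.
Linearity then gives spanning for all polynomials.\<close>

lemma mon_apply: "mon u w = (if w = u then 1 else 0)"
  by (simp add: mon_def)

lemma mon_ncP: "(mon u :: 'a::zero_neq_one ncpoly) \<in> ncP"
proof -
  have "{w. mon u w \<noteq> (0::'a)} \<subseteq> {u}" by (auto simp: mon_apply)
  then show ?thesis unfolding ncP_def using finite_subset by blast
qed

lemma psmult_ncP: "(f :: 'a::mult_zero ncpoly) \<in> ncP \<Longrightarrow> psmult c f \<in> ncP"
proof -
  assume "f \<in> ncP"
  moreover have "{w. psmult c f w \<noteq> 0} \<subseteq> {w. f w \<noteq> 0}"
    by (auto simp: psmult_def)
  ultimately show ?thesis unfolding ncP_def using finite_subset by blast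
qed

lemma padd_ncP: "(f :: 'a::monoid_add ncpoly) \<in> ncP \<Longrightarrow> g \<in> ncP \<Longrightarrow> padd f g \<in> ncP"
proof -
  assume "f \<in> ncP" "g \<in> ncP"
  moreover have "{w. padd f g w \<noteq> 0} \<subseteq> {w. f w \<noteq> 0} \<union> {w. g w \<noteq> 0}"
    by (auto simp: padd_def)
  ultimately show ?thesis unfolding ncP_def using finite_subset by blast
qed

lemma pmul_mon_mon: "pmul (mon u) (mon v) = (mon (u @ v) :: 'a::comm_ring_1 ncpoly)"
proof
  fix w :: "var list"
  have "pmul (mon u) (mon v) w =
      (\<Sum>i\<le>length w. if i = length u \<and> w = u @ v then 1 else (0::'a))"
    unfolding pmul_def
  proof (rule sum.cong[OF refl])
    fix i assume "i \<in> {..length w}"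
    then have "take i w = u \<and> drop i w = v \<longleftrightarrow> i = length u \<and> w = u @ v"
      by (metis append_eq_conv_conj append_take_drop_id atMost_iff length_take min_absorb2)
    then show "mon u (take i w) * mon v (drop i w) = (if i = length u \<and> w = u @ v then 1 else (0::'a))"
      unfolding mon_apply by (simp only: split: if_split) (simp, blast)
  qed
  also have "\<dots> = mon (u @ v) w"
    by (simp add: mon_apply)
  finally show "pmul (mon u) (mon v) w = (mon (u @ v) w :: 'a)" .
qed

lemma pmul_psub_left: "pmul (psub a b) c = psub (pmul a c) (pmul b c)"
  by (simp add: fun_eq_iff pmul_def psub_def left_diff_distrib sum_subtractf)

lemma pmul_psub_right: "pmul a (psub b c) = psub (pmul a b) (pmul a c)"
  by (simp add: fun_eq_iff pmul_def psub_def right_diff_distrib sum_subtractf)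

lemma pmul_psmult_left: "pmul (psmult e a) c = psmult e (pmul a c)"
  by (simp add: fun_eq_iff pmul_def psmult_def sum_distrib_left mult.assoc)

lemma pmul_psmult_right: "pmul a (psmult e c) = psmult e (pmul a c)"
  by (simp add: fun_eq_iff pmul_def psmult_def sum_distrib_left mult.left_commute)

lemma pmul_const_left: "pmul (psmult c (mon [])) a = psmult c a"
proof
  fix w :: "var list"
  have "pmul (psmult c (mon [])) a w = (\<Sum>i\<le>length w. if i = 0 then c * a w else 0)"
    unfolding pmul_def by (rule sum.cong) (auto simp: psmult_def mon_apply)
  then show "pmul (psmult c (mon [])) a w = psmult c a w"
    by (simp add: psmult_def)
qed

lemma ncpoly_sum_mon:
  assumes "finite {w. g w \<noteq> 0}"
  shows "(\<lambda>v. \<Sum>w | g w \<noteq> 0. g w * mon w v) = (g :: 'a::comm_ring_1 ncpoly)"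
proof
  fix v
  have "(\<Sum>w | g w \<noteq> 0. g w * mon w v) = (\<Sum>w | g w \<noteq> 0. if v = w then g w else 0)"
    by (rule sum.cong) (auto simp: mon_apply)
  then show "(\<Sum>w | g w \<noteq> 0. g w * mon w v) = g v"
    by (simp add: sum.delta'[OF assms])
qed


lemma eval_word_rename:
  "eval_word (\<lambda>x. mon [\<sigma> x]) u = (mon (map \<sigma> u) :: 'a::comm_ring_1 ncpoly)"
  by (induction u) (simp_all add: eval_word_def pmul_mon_mon)

lemma subst_rename_psub:
  assumes "u \<noteq> v"
  shows "subst (\<lambda>x. mon [\<sigma> x]) (psub (mon u) (mon v))
       = (psub (mon (map \<sigma> u)) (mon (map \<sigma> v)) :: 'a::comm_ring_1 ncpoly)"
proof -
  have "{w. psub (mon u) (mon v) w \<noteq> (0::'a)} = {u, v}"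
    using assms by (auto simp: psub_def mon_apply)
  with assms show ?thesis
    by (simp add: subst_def eval_word_rename fun_eq_iff) (simp add: psub_def mon_apply)
qed

lemma subst_rename_padd:
  assumes "u \<noteq> v"
  shows "subst (\<lambda>x. mon [\<sigma> x]) (padd (mon u) (mon v))
       = (padd (mon (map \<sigma> u)) (mon (map \<sigma> v)) :: 'a::comm_ring_1 ncpoly)"
proof -
  have "{w. padd (mon u) (mon v) w \<noteq> (0::'a)} = {u, v}"
    using assms by (auto simp: padd_def mon_apply)
  with assms show ?thesis
    by (simp add: subst_def eval_word_rename fun_eq_iff) (simp add: padd_def mon_apply)
qed

lemma weak_subst_rename:
  assumes "\<And>x. is_Z (\<sigma> x) = is_Z x"
  shows "weak_subst (\<lambda>x. mon [\<sigma> x] :: 'a::comm_ring_1 ncpoly)"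
  unfolding weak_subst_def L0_def L1_def
proof (intro conjI allI CollectI)
  fix i
  have "\<not> is_Z (\<sigma> (Y i))" "is_Z (\<sigma> (Z i))"
    using assms[of "Y i"] assms[of "Z i"] by (simp_all add: is_Z_def)
  then show "homog False (mon [\<sigma> (Y i)] :: 'a ncpoly)" "homog True (mon [\<sigma> (Z i)] :: 'a ncpoly)"
    by (simp_all add: homog_def mon_apply zdeg_def)
qed (auto intro: LieX.gen)


definition sign_equiv :: "'a::comm_ring_1 ncpoly set \<Rightarrow> var list \<Rightarrow> var list \<Rightarrow> bool" where
  "sign_equiv J u v \<longleftrightarrow> (\<exists>e. (e = 1 \<or> e = -1) \<and> psub (mon u) (psmult e (mon v)) \<in> J)"

locale nc_ideal =
  fixes J :: "'a::comm_ring_1 ncpoly set"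
  assumes ideal: "is_ideal J"
begin

lemma zero_mem: "(\<lambda>_. 0) \<in> J"
  using ideal by (simp add: is_ideal_def)

lemma padd_mem: "a \<in> J \<Longrightarrow> b \<in> J \<Longrightarrow> padd a b \<in> J"
  using ideal by (simp add: is_ideal_def)

lemma pmul_mem_left: "a \<in> J \<Longrightarrow> p \<in> ncP \<Longrightarrow> pmul p a \<in> J"
  using ideal by (simp add: is_ideal_def)

lemma pmul_mem_right: "a \<in> J \<Longrightarrow> p \<in> ncP \<Longrightarrow> pmul a p \<in> J"
  using ideal by (simp add: is_ideal_def)

lemma psmult_mem: "a \<in> J \<Longrightarrow> psmult c a \<in> J"
  using pmul_mem_left[OF _ psmult_ncP[OF mon_ncP[of "[]"]], of a c] by (simp add: pmul_const_left)

lemma sign_equiv_refl: "sign_equiv J u u"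
proof -
  have "psub (mon u) (psmult 1 (mon u)) = (\<lambda>_. 0 :: 'a)"
    by (simp add: psub_def psmult_def fun_eq_iff)
  then show ?thesis
    unfolding sign_equiv_def using zero_mem by (intro exI[of _ 1]) simp
qed

lemma sign_equiv_trans [trans]: "sign_equiv J u v \<Longrightarrow> sign_equiv J v w \<Longrightarrow> sign_equiv J u w"
proof -
  assume "sign_equiv J u v" "sign_equiv J v w"
  then obtain e1 e2 :: 'a
    where e1: "e1 = 1 \<or> e1 = -1" "psub (mon u) (psmult e1 (mon v)) \<in> J"
      and e2: "e2 = 1 \<or> e2 = -1" "psub (mon v) (psmult e2 (mon w)) \<in> J"
    unfolding sign_equiv_def by blast
  have "psub (mon u) (psmult (e1 * e2) (mon w)) =
      padd (psub (mon u) (psmult e1 (mon v))) (psmult e1 (psub (mon v) (psmult e2 (mon w))))"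
    by (simp add: fun_eq_iff padd_def psub_def psmult_def algebra_simps)
  then have "psub (mon u) (psmult (e1 * e2) (mon w)) \<in> J"
    using padd_mem[OF e1(2) psmult_mem[OF e2(2)]] by simp
  moreover have "e1 * e2 = 1 \<or> e1 * e2 = -1"
    using e1(1) e2(1) by auto
  ultimately show ?thesis
    unfolding sign_equiv_def by blast
qed

lemma sign_equiv_append: "sign_equiv J u v \<Longrightarrow> sign_equiv J (p @ u @ q) (p @ v @ q)"
proof -
  assume "sign_equiv J u v"
  then obtain e :: 'a where e: "e = 1 \<or> e = -1" "psub (mon u) (psmult e (mon v)) \<in> J"
    unfolding sign_equiv_def by blast
  have "psub (mon (p @ u @ q)) (psmult e (mon (p @ v @ q))) =
      pmul (mon p) (pmul (psub (mon u) (psmult e (mon v))) (mon q))"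
    by (simp add: pmul_psub_left pmul_psub_right pmul_psmult_left pmul_psmult_right pmul_mon_mon)
  then have "psub (mon (p @ u @ q)) (psmult e (mon (p @ v @ q))) \<in> J"
    using pmul_mem_left[OF pmul_mem_right[OF e(2) mon_ncP] mon_ncP] by simp
  with e(1) show ?thesis
    unfolding sign_equiv_def by blast
qed

lemma sign_equiv_Cons: "sign_equiv J u v \<Longrightarrow> sign_equiv J (x # u) (x # v)"
  using sign_equiv_append[of u v "[x]" "[]"] by simp

lemma sign_equiv_append_left: "sign_equiv J u v \<Longrightarrow> sign_equiv J (p @ u) (p @ v)"
  using sign_equiv_append[of u v p "[]"] by simp

end


subsection \<open>Sorting with steps of length two\<close>

fun insort2 :: "nat \<Rightarrow> nat list \<Rightarrow> nat list" where
  "insort2 x (y # z # r) = (if x \<le> z then x # y # z # r else z # y # insort2 x r)"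
| "insort2 x r = x # r"

fun sort2 :: "nat list \<Rightarrow> nat list" where
  "sort2 [] = []"
| "sort2 (x # c) = insort2 x (sort2 c)"

fun sorted2 :: "nat list \<Rightarrow> bool" where
  "sorted2 (x # y # z # r) = (x \<le> z \<and> sorted2 (y # z # r))"
| "sorted2 _ = True"

lemma sorted2_insort2: "sorted2 r \<Longrightarrow> sorted2 (insort2 x r)"
proof (induction x r rule: insort2.induct)
  case (1 x y z r)
  show ?case
  proof (cases "x \<le> z")
    case False
    have "sorted2 (insort2 x r)"
      using "1.IH"[OF False] "1.prems" by (cases r rule: sorted2.cases) auto
    with False "1.prems" show ?thesis
      by (cases r rule: sorted2.cases) (auto split: if_splits)
  qed (use "1.prems" in simp)
qed simp_all

lemma sorted2_sort2: "sorted2 (sort2 c)"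
  by (induction c) (auto intro: sorted2_insort2)

lemma sorted2_nth_step: "sorted2 c \<Longrightarrow> i + 2 < length c \<Longrightarrow> c ! i \<le> c ! (i + 2)"
proof (induction c arbitrary: i rule: sorted2.induct)
  case (1 x y z r)
  then show ?case
    by (cases i) auto
qed simp_all

lemma sorted2_nth_mono:
  assumes "sorted2 c" "i < j" "j < length c" "even i = even j"
  shows "c ! i \<le> c ! j"
proof -
  have "even (j - i)"
    using assms(2,4) by simp
  then obtain k where "j - i = 2 * k"
    by (rule evenE)
  then have "j = i + 2 * k"
    using assms(2) by simp
  with assms(3) show ?thesis
  proof (induction k arbitrary: j)
    case (Suc k)
    then have "c ! i \<le> c ! (i + 2 * k)" by simp
    also have "\<dots> \<le> c ! (i + 2 * k + 2)"
      using sorted2_nth_step[OF assms(1)] Suc by simp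
    finally show ?case using Suc by simp
  qed simp
qed

lemma Bmon_normal_form: "sorted a \<Longrightarrow> sorted2 c \<Longrightarrow> map Y a @ map Z c \<in> Bmon"
  unfolding Bmon_def using sorted2_nth_mono by blast


subsection \<open>Reduction of words to \<open>Bmon\<close>\<close>

locale gens_weak_ideal =
  fixes J :: "'a::comm_ring_1 ncpoly set"
  assumes weak: "weak_ideal J" and gens: "gens \<subseteq> J"
begin

sublocale nc_ideal J
  using weak by unfold_locales (simp add: weak_ideal_def)

lemma subst_rename_mem:
  assumes "\<And>x. is_Z (\<sigma> x) = is_Z x" "f \<in> J"
  shows "subst (\<lambda>x. mon [\<sigma> x]) f \<in> J"
  using weak weak_subst_rename[OF assms(1)] assms(2) unfolding weak_ideal_def by blast

lemma sign_equiv_YY: "sign_equiv J [Y i, Y j] [Y j, Y i]"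
proof -
  let ?\<sigma> = "\<lambda>x. case x of Y k \<Rightarrow> Y (if k = 1 then i else j) | Z k \<Rightarrow> Z k"
  have "subst (\<lambda>x. mon [?\<sigma> x]) (psub (mon [Y 1, Y 2]) (mon [Y 2, Y 1])) \<in> J"
    using gens by (intro subst_rename_mem) (auto simp: gens_def is_Z_def split: var.split)
  then show ?thesis
    unfolding sign_equiv_def by (intro exI[of _ 1]) (simp add: subst_rename_psub psmult_def)
qed

lemma sign_equiv_ZZZ: "sign_equiv J [Z a, Z b, Z c] [Z c, Z b, Z a]"
proof -
  let ?\<sigma> = "\<lambda>x. case x of Y k \<Rightarrow> Y k | Z k \<Rightarrow> Z (if k = 1 then a else if k = 2 then b else c)"
  have "subst (\<lambda>x. mon [?\<sigma> x]) (psub (mon [Z 1, Z 2, Z 3]) (mon [Z 3, Z 2, Z 1])) \<in> J"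
    using gens by (intro subst_rename_mem) (auto simp: gens_def is_Z_def split: var.split)
  then show ?thesis
    unfolding sign_equiv_def by (intro exI[of _ 1]) (simp add: subst_rename_psub psmult_def)
qed

lemma sign_equiv_ZY: "sign_equiv J [Z j, Y i] [Y i, Z j]"
proof -
  let ?\<sigma> = "\<lambda>x. case x of Y k \<Rightarrow> Y i | Z k \<Rightarrow> Z j"
  have "subst (\<lambda>x. mon [?\<sigma> x]) (padd (mon [Y 1, Z 1]) (mon [Z 1, Y 1])) \<in> J"
    using gens by (intro subst_rename_mem) (auto simp: gens_def is_Z_def split: var.split)
  moreover have "psub (mon [Z j, Y i]) (psmult (-1) (mon [Y i, Z j]))
      = (padd (mon [Y i, Z j]) (mon [Z j, Y i]) :: 'a ncpoly)"
    by (simp add: fun_eq_iff psub_def psmult_def padd_def)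
  ultimately show ?thesis
    unfolding sign_equiv_def by (intro exI[of _ "-1"]) (simp add: subst_rename_padd)
qed

lemma sign_equiv_Z_past_Ys: "sign_equiv J (Z j # map Y a @ r) (map Y a @ Z j # r)"
proof (induction a)
  case (Cons i a)
  have "sign_equiv J ([] @ [Z j, Y i] @ map Y a @ r) ([] @ [Y i, Z j] @ map Y a @ r)"
    by (rule sign_equiv_append[OF sign_equiv_ZY])
  with sign_equiv_Cons[OF Cons] show ?case
    by (auto intro: sign_equiv_trans)
qed (simp add: sign_equiv_refl)

lemma sign_equiv_Ys_first: "\<exists>a c. sign_equiv J w (map Y a @ map Z c)"
proof (induction w)
  case Nil
  show ?case
    using sign_equiv_refl[of "[]"] by (intro exI[of _ "[]"]) simp
next
  case (Cons x w)
  then obtain a c where IH: "sign_equiv J (x # w) (x # map Y a @ map Z c)"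
    using sign_equiv_Cons by blast
  show ?case
  proof (cases x)
    case (Y i)
    with IH show ?thesis by (intro exI[of _ "i # a"] exI[of _ c]) simp
  next
    case (Z j)
    with IH sign_equiv_Z_past_Ys[of j a "map Z c"] show ?thesis
      by (intro exI[of _ a] exI[of _ "j # c"]) (auto intro: sign_equiv_trans)
  qed
qed

lemma sign_equiv_insort_Y: "sign_equiv J (Y i # map Y b @ r) (map Y (insort i b) @ r)"
proof (induction b)
  case (Cons x b)
  have "sign_equiv J ([] @ [Y i, Y x] @ map Y b @ r) ([] @ [Y x, Y i] @ map Y b @ r)"
    by (rule sign_equiv_append[OF sign_equiv_YY])
  with sign_equiv_Cons[OF Cons] show ?case
    by (auto intro: sign_equiv_trans sign_equiv_refl)
qed (simp add: sign_equiv_refl)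

lemma sign_equiv_sort_Y: "sign_equiv J (map Y a @ r) (map Y (sort a) @ r)"
proof (induction a)
  case (Cons i a)
  with sign_equiv_insort_Y[of i "sort a" r] show ?case
    by (auto intro: sign_equiv_trans dest: sign_equiv_Cons)
qed (simp add: sign_equiv_refl)

lemma sign_equiv_insort2_Z: "sign_equiv J (Z x # map Z c) (map Z (insort2 x c))"
proof (induction x c rule: insort2.induct)
  case (1 x y z r)
  show ?case
  proof (cases "x \<le> z")
    case False
    have "sign_equiv J ([] @ [Z x, Z y, Z z] @ map Z r) ([] @ [Z z, Z y, Z x] @ map Z r)"
      by (rule sign_equiv_append[OF sign_equiv_ZZZ])
    moreover have "sign_equiv J ([Z z, Z y] @ Z x # map Z r) ([Z z, Z y] @ map Z (insort2 x r))"
      by (rule sign_equiv_append_left[OF "1.IH"[OF False]])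
    ultimately show ?thesis
      using False by (auto intro: sign_equiv_trans)
  qed (simp add: sign_equiv_refl)
qed (simp_all add: sign_equiv_refl)

lemma sign_equiv_sort2_Z: "sign_equiv J (map Z c) (map Z (sort2 c))"
proof (induction c)
  case (Cons x c)
  with sign_equiv_insort2_Z[of x "sort2 c"] show ?case
    by (auto intro: sign_equiv_trans dest: sign_equiv_Cons)
qed (simp add: sign_equiv_refl)

lemma sign_equiv_Bmon: "\<exists>v\<in>Bmon. sign_equiv J w v"
proof -
  obtain a c where "sign_equiv J w (map Y a @ map Z c)"
    using sign_equiv_Ys_first by blast
  also have "sign_equiv J \<dots> (map Y (sort a) @ map Z c)"
    by (rule sign_equiv_sort_Y)
  also have "sign_equiv J \<dots> (map Y (sort a) @ map Z (sort2 c))"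
    by (rule sign_equiv_append_left[OF sign_equiv_sort2_Z])
  finally show ?thesis
    using Bmon_normal_form[OF sorted_sort sorted2_sort2] by blast
qed

end


definition Bspan_mod :: "'a::comm_ring_1 ncpoly set \<Rightarrow> 'a ncpoly \<Rightarrow> bool" where
  "Bspan_mod J f \<longleftrightarrow> (\<exists>g\<in>ncP. (\<forall>w. g w \<noteq> 0 \<longrightarrow> w \<in> Bmon) \<and> psub f g \<in> J)"

context nc_ideal
begin

lemma Bspan_mod_zero: "Bspan_mod J (\<lambda>_. 0)"
  unfolding Bspan_mod_def ncP_def using zero_mem
  by (intro bexI[of _ "\<lambda>_. 0"]) (simp_all add: psub_def)

lemma Bspan_mod_padd: "Bspan_mod J f \<Longrightarrow> Bspan_mod J h \<Longrightarrow> Bspan_mod J (padd f h)"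
proof -
  assume "Bspan_mod J f" "Bspan_mod J h"
  then obtain g1 g2
    where g1: "g1 \<in> ncP" "\<forall>w. g1 w \<noteq> 0 \<longrightarrow> w \<in> Bmon" "psub f g1 \<in> J"
      and g2: "g2 \<in> ncP" "\<forall>w. g2 w \<noteq> 0 \<longrightarrow> w \<in> Bmon" "psub h g2 \<in> J"
    unfolding Bspan_mod_def by blast
  have "psub (padd f h) (padd g1 g2) = padd (psub f g1) (psub h g2)"
    by (simp add: fun_eq_iff psub_def padd_def)
  then have "psub (padd f h) (padd g1 g2) \<in> J"
    using padd_mem[OF g1(3) g2(3)] by simp
  moreover have "\<forall>w. padd g1 g2 w \<noteq> 0 \<longrightarrow> w \<in> Bmon"
    using g1(2) g2(2) unfolding padd_def by (metis add_0)
  ultimately show ?thesis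
    unfolding Bspan_mod_def using padd_ncP[OF g1(1) g2(1)] by blast
qed

lemma Bspan_mod_psmult: "Bspan_mod J f \<Longrightarrow> Bspan_mod J (psmult c f)"
proof -
  assume "Bspan_mod J f"
  then obtain g where g: "g \<in> ncP" "\<forall>w. g w \<noteq> 0 \<longrightarrow> w \<in> Bmon" "psub f g \<in> J"
    unfolding Bspan_mod_def by blast
  have "psub (psmult c f) (psmult c g) = psmult c (psub f g)"
    by (simp add: fun_eq_iff psub_def psmult_def algebra_simps)
  then have "psub (psmult c f) (psmult c g) \<in> J"
    using psmult_mem[OF g(3)] by simp
  moreover have "\<forall>w. psmult c g w \<noteq> 0 \<longrightarrow> w \<in> Bmon"
    using g(2) unfolding psmult_def by (metis mult_zero_right)
  ultimately show ?thesis
    unfolding Bspan_mod_def using psmult_ncP[OF g(1)] by blast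
qed

lemma Bspan_mod_ncP:
  assumes mon: "\<And>w. Bspan_mod J (mon w)" and f: "f \<in> ncP"
  shows "Bspan_mod J f"
proof -
  have "finite {w. f w \<noteq> 0}"
    using f by (simp add: ncP_def)
  then show ?thesis
  proof (induction "{w. f w \<noteq> 0}" arbitrary: f rule: finite_induct)
    case empty
    then have "f = (\<lambda>_. 0)"
      by (auto simp: fun_eq_iff)
    then show ?case
      using Bspan_mod_zero by simp
  next
    case (insert a A)
    then have "A = {w. (f(a := 0)) w \<noteq> 0}"
      by auto
    then have "Bspan_mod J (f(a := 0))"
      by (rule insert.hyps(3))
    then have "Bspan_mod J (padd (psmult (f a) (mon a)) (f(a := 0)))"
      by (rule Bspan_mod_padd[OF Bspan_mod_psmult[OF mon]])
    moreover have "padd (psmult (f a) (mon a)) (f(a := 0)) = f"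
      by (simp add: fun_eq_iff padd_def psmult_def mon_apply)
    ultimately show ?case
      by simp
  qed
qed

end

lemma (in gens_weak_ideal) Bspan_mod_mon: "Bspan_mod J (mon w)"
proof -
  obtain v e where "v \<in> Bmon" "psub (mon w) (psmult e (mon v)) \<in> J"
    using sign_equiv_Bmon unfolding sign_equiv_def by blast
  then show ?thesis
    unfolding Bspan_mod_def using psmult_ncP[OF mon_ncP]
    by (intro bexI[of _ "psmult e (mon v)"]) (auto simp: psmult_def mon_apply)
qed


lemma weak_ideal_Inter:
  assumes "J \<in> F" and weak: "\<And>J. J \<in> F \<Longrightarrow> weak_ideal J"
  shows "weak_ideal (\<Inter> F)"
proof -
  have ideal: "\<And>J. J \<in> F \<Longrightarrow> is_ideal J"
    using weak by (simp add: weak_ideal_def)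
  have "\<Inter> F \<subseteq> ncP"
    using ideal[OF assms(1)] assms(1) by (auto simp: is_ideal_def)
  moreover have "(\<lambda>_. 0) \<in> \<Inter> F" "\<forall>a\<in>\<Inter> F. \<forall>b\<in>\<Inter> F. padd a b \<in> \<Inter> F"
      "\<forall>a\<in>\<Inter> F. \<forall>p\<in>ncP. pmul p a \<in> \<Inter> F \<and> pmul a p \<in> \<Inter> F"
    using ideal by (auto simp: is_ideal_def)
  moreover have "\<forall>s. weak_subst s \<longrightarrow> (\<forall>f\<in>\<Inter> F. subst s f \<in> \<Inter> F)"
    using weak by (auto simp: weak_ideal_def)
  ultimately show ?thesis
    by (simp add: weak_ideal_def is_ideal_def)
qed

lemma weak_ideal_weak_ideal_gen:
  assumes "weak_ideal J" "S \<subseteq> J"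
  shows "weak_ideal (weak_ideal_gen S)"
  unfolding weak_ideal_gen_def using assms by (intro weak_ideal_Inter) auto

lemma weak_ideal_gen_superset: "S \<subseteq> weak_ideal_gen S"
  by (auto simp: weak_ideal_gen_def)

lemma weak_ideal_gen_UNIV: "\<nexists>J. weak_ideal J \<and> S \<subseteq> J \<Longrightarrow> weak_ideal_gen S = UNIV"
  by (auto simp: weak_ideal_gen_def)

theorem mainTheorem3:
  fixes f :: "'a::idom ncpoly"
  assumes "infinite (UNIV :: 'a set)"
    and "f \<in> ncP"
  shows "\<exists>S c. finite S \<and> S \<subseteq> Bmon \<and>
           psub f (\<lambda>v. \<Sum>w\<in>S. c w * mon w v) \<in> (Iw :: 'a ncpoly set)"
proof (cases "\<exists>J :: 'a ncpoly set. weak_ideal J \<and> gens \<subseteq> J")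
  case True
  then interpret gens_weak_ideal "Iw :: 'a ncpoly set"
    unfolding Iw_def using weak_ideal_weak_ideal_gen weak_ideal_gen_superset
    by unfold_locales blast+
  obtain g where g: "g \<in> ncP" "\<forall>w. g w \<noteq> 0 \<longrightarrow> w \<in> Bmon" "psub f g \<in> Iw"
    using Bspan_mod_ncP[OF Bspan_mod_mon assms(2)] unfolding Bspan_mod_def by blast
  then have "finite {w. g w \<noteq> 0}"
    by (simp add: ncP_def)
  with g show ?thesis
    by (intro exI[of _ "{w. g w \<noteq> 0}"] exI[of _ g]) (auto simp: ncpoly_sum_mon)
next
  case False
  then show ?thesis
    by (intro exI[of _ "{}"]) (simp add: Iw_def weak_ideal_gen_UNIV)
qed

end
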